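(* For every band operator $A$ on $\ell^2(\mathbb{Z})$ and every $\varepsilon>0$ there are $l,r\in\mathbb{Z}$ such that $\nu(A)\le\nu_{l..r}(A)<\nu(A)+\varepsilon$.
   Context: A band operator on $\ell^2(\mathbb{Z})$ is a finite sum $\sum_{k=-w}^{w}M_{a^{(k)}}S^k$ with $a^{(k)}\in\ell^\infty(\mathbb{Z})$, $(Sx)_n=x_{n-1}$, $(M_ax)_n=a_nx_n$. $\nu(A):=\inf\{\|Ax\|:\|x\|=1\}$; for $l..r:=\{n\in\mathbb{Z}:l\le n\le r\}$, $\nu_{l..r}(A):=\inf\{\|Ax\|:\operatorname{supp}x\subseteq l..r,\ \|x\|=1\}$. *)

theory Defs
  imports "HOL-Analysis.Analysis"
begin

definition l2 :: "(int \<Rightarrow> complex) set" where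
  "l2 = {x. (\<lambda>n. (cmod (x n))\<^sup>2) summable_on UNIV}"

definition l2norm :: "(int \<Rightarrow> complex) \<Rightarrow> real" where
  "l2norm x = sqrt (\<Sum>\<^sub>\<infinity>n. (cmod (x n))\<^sup>2)"

text \<open>Shift: (S x)_n = x_(n-1), so (S^k x)_n = x_(n-k); multiplication (M_a x)_n = a_n x_n.\<close>
definition shift_pow :: "int \<Rightarrow> (int \<Rightarrow> complex) \<Rightarrow> (int \<Rightarrow> complex)" where
  "shift_pow k x = (\<lambda>n. x (n - k))"

definition mult_op :: "(int \<Rightarrow> complex) \<Rightarrow> (int \<Rightarrow> complex) \<Rightarrow> (int \<Rightarrow> complex)" where
  "mult_op a x = (\<lambda>n. a n * x n)"

definition band_op :: "nat \<Rightarrow> (int \<Rightarrow> int \<Rightarrow> complex) \<Rightarrow> (int \<Rightarrow> complex) \<Rightarrow> (int \<Rightarrow> complex)" where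
  "band_op w a x = (\<lambda>n. \<Sum>k\<in>{- int w..int w}. mult_op (a k) (shift_pow k x) n)"

definition is_band_operator :: "((int \<Rightarrow> complex) \<Rightarrow> (int \<Rightarrow> complex)) \<Rightarrow> bool" where
  "is_band_operator A \<longleftrightarrow>
     (\<exists>w a. (\<forall>k. bounded (range (a k))) \<and> (\<forall>x\<in>l2. A x = band_op w a x))"

definition lower_norm :: "((int \<Rightarrow> complex) \<Rightarrow> (int \<Rightarrow> complex)) \<Rightarrow> real" where
  "lower_norm A = Inf {l2norm (A x) | x. x \<in> l2 \<and> l2norm x = 1}"

definition lower_norm_on :: "int \<Rightarrow> int \<Rightarrow> ((int \<Rightarrow> complex) \<Rightarrow> (int \<Rightarrow> complex)) \<Rightarrow> real" where
  "lower_norm_on l r A = Inf {l2norm (A x) | x. x \<in> l2 \<and> l2norm x = 1 \<and>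
      (\<forall>n. x n \<noteq> 0 \<longrightarrow> l \<le> n \<and> n \<le> r)}"

end

theory Submission
  imports Defs
begin

text \<open>Truncations x_N of x in l2(Z) to -N..N converge to x in norm, and a band operator A is
  linear and bounded on l2(Z), so ||A x_N|| / ||x_N|| tends to ||A x|| / ||x||. Starting from a unit
  vector x with ||A x|| < nu(A) + eps, the normalised truncation x_N / ||x_N|| is, for large N, a
  unit vector supported in -N..N with the same property. The bound nu(A) <= nu_{l..r}(A) holds
  because nu_{l..r}(A) is an infimum over a nonempty subset of the set defining nu(A).\<close>

lemma l2norm_nonneg: "0 \<le> l2norm z"
  unfolding l2norm_def by (simp add: infsum_nonneg)

lemma L2_set_le_l2norm:
  assumes "z \<in> l2" "finite F"
  shows "L2_set (\<lambda>n. cmod (z n)) F \<le> l2norm z"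
proof -
  have "(\<Sum>n\<in>F. (cmod (z n))\<^sup>2) \<le> (\<Sum>\<^sub>\<infinity>n. (cmod (z n))\<^sup>2)"
    using assms by (intro finite_sum_le_infsum) (auto simp: l2_def)
  then show ?thesis
    unfolding L2_set_def l2norm_def by (rule real_sqrt_le_mono)
qed

lemma l2_if_L2_set_le:
  assumes "\<And>F. finite F \<Longrightarrow> L2_set (\<lambda>n. cmod (z n)) F \<le> B"
  shows "z \<in> l2 \<and> l2norm z \<le> B"
proof -
  have "0 \<le> B" using assms[of "{}"] by simp
  have partial_sums: "(\<Sum>n\<in>F. (cmod (z n))\<^sup>2) \<le> B\<^sup>2" if "finite F" for F
    using assms[OF that] unfolding L2_set_def by (rule sqrt_le_D)
  have summable: "(\<lambda>n. (cmod (z n))\<^sup>2) summable_on UNIV"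
    by (rule nonneg_bdd_above_summable_on) (auto intro!: bdd_aboveI partial_sums)
  have "(\<Sum>\<^sub>\<infinity>n. (cmod (z n))\<^sup>2) \<le> B\<^sup>2"
    by (rule infsum_le_finite_sums[OF summable]) (use partial_sums in auto)
  then have "l2norm z \<le> sqrt (B\<^sup>2)"
    unfolding l2norm_def by (rule real_sqrt_le_mono)
  with \<open>0 \<le> B\<close> summable show ?thesis by (simp add: l2_def)
qed

lemma
  assumes "u \<in> l2" "v \<in> l2"
  shows l2_add: "(\<lambda>n. u n + v n) \<in> l2"
    and l2norm_triangle: "l2norm (\<lambda>n. u n + v n) \<le> l2norm u + l2norm v"
proof -
  have "(\<lambda>n. u n + v n) \<in> l2 \<and> l2norm (\<lambda>n. u n + v n) \<le> l2norm u + l2norm v"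
  proof (rule l2_if_L2_set_le)
    fix F :: "int set" assume "finite F"
    have "L2_set (\<lambda>n. cmod (u n + v n)) F \<le> L2_set (\<lambda>n. cmod (u n) + cmod (v n)) F"
      by (rule L2_set_mono) (auto simp: norm_triangle_ineq)
    also have "\<dots> \<le> L2_set (\<lambda>n. cmod (u n)) F + L2_set (\<lambda>n. cmod (v n)) F"
      by (rule L2_set_triangle_ineq)
    also have "\<dots> \<le> l2norm u + l2norm v"
      using assms \<open>finite F\<close> by (intro add_mono L2_set_le_l2norm)
    finally show "L2_set (\<lambda>n. cmod (u n + v n)) F \<le> l2norm u + l2norm v" .
  qed
  then show "(\<lambda>n. u n + v n) \<in> l2" "l2norm (\<lambda>n. u n + v n) \<le> l2norm u + l2norm v"
    by auto
qed

lemma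
  assumes "u \<in> l2"
  shows l2_scale: "(\<lambda>n. c * u n) \<in> l2"
    and l2norm_scale: "l2norm (\<lambda>n. c * u n) = cmod c * l2norm u"
proof -
  have summable: "(\<lambda>n. (cmod (u n))\<^sup>2) summable_on UNIV"
    using assms by (simp add: l2_def)
  have sq: "(\<lambda>n. (cmod (c * u n))\<^sup>2) = (\<lambda>n. (cmod (u n))\<^sup>2 * (cmod c)\<^sup>2)"
    by (simp add: norm_mult power_mult_distrib mult.commute)
  have "(\<lambda>n. (cmod (c * u n))\<^sup>2) summable_on UNIV"
    unfolding sq by (rule summable_on_cmult_left[OF summable])
  then show "(\<lambda>n. c * u n) \<in> l2"
    by (simp add: l2_def)
  have "(\<Sum>\<^sub>\<infinity>n. (cmod (c * u n))\<^sup>2) = (\<Sum>\<^sub>\<infinity>n. (cmod (u n))\<^sup>2) * (cmod c)\<^sup>2"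
    unfolding sq by (rule infsum_cmult_left) (use summable in auto)
  then show "l2norm (\<lambda>n. c * u n) = cmod c * l2norm u"
    by (simp add: l2norm_def real_sqrt_mult)
qed

lemma l2_diff:
  assumes "u \<in> l2" "v \<in> l2"
  shows "(\<lambda>n. u n - v n) \<in> l2"
  using l2_add[OF assms(1) l2_scale[OF assms(2), of "-1"]] by simp

lemma l2norm_minus_commute: "l2norm (\<lambda>n. u n - v n) = l2norm (\<lambda>n. v n - u n)"
  by (simp add: l2norm_def norm_minus_commute)

lemma l2norm_diff_ge:
  assumes "u \<in> l2" "v \<in> l2"
  shows "\<bar>l2norm u - l2norm v\<bar> \<le> l2norm (\<lambda>n. u n - v n)"
proof -
  have "l2norm u \<le> l2norm v + l2norm (\<lambda>n. u n - v n)"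
    using l2norm_triangle[OF assms(2) l2_diff[OF assms]] by simp
  moreover have "l2norm v \<le> l2norm u + l2norm (\<lambda>n. v n - u n)"
    using l2norm_triangle[OF assms(1) l2_diff[OF assms(2,1)]] by simp
  moreover have "l2norm (\<lambda>n. v n - u n) = l2norm (\<lambda>n. u n - v n)"
    by (rule l2norm_minus_commute)
  ultimately show ?thesis by linarith
qed

lemma tendsto_l2norm:
  assumes "\<And>N. f N \<in> l2" "x \<in> l2"
    and "((\<lambda>N. l2norm (\<lambda>n. f N n - x n)) \<longlongrightarrow> 0) F"
  shows "((\<lambda>N. l2norm (f N)) \<longlongrightarrow> l2norm x) F"
proof -
  have "((\<lambda>N. l2norm (f N) - l2norm x) \<longlongrightarrow> 0) F"
    by (rule Lim_null_comparison[OF _ assms(3)]) (simp add: assms l2norm_diff_ge)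
  then show ?thesis by (simp add: LIM_zero_iff)
qed

lemma unit_vector_l2:
  shows "(\<lambda>n. if n = k then 1 else 0) \<in> l2"
    and "l2norm (\<lambda>n. if n = k then 1 else 0) = 1"
proof -
  have sq: "(\<lambda>n. (cmod (if n = k then 1 else 0))\<^sup>2) = (\<lambda>n. if n = k then 1 else (0::real))"
    by auto
  have "(\<lambda>n. if n = k then 1 else (0::real)) summable_on UNIV"
    by (rule summable_on_cong_neutral[where S = "{k}", THEN iffD1]) auto
  then show "(\<lambda>n. if n = k then 1 else 0) \<in> l2"
    unfolding l2_def mem_Collect_eq sq .
  have "(\<Sum>\<^sub>\<infinity>n. if n = k then 1 else (0::real)) = (\<Sum>\<^sub>\<infinity>n\<in>{k}. 1)"
    by (rule infsum_cong_neutral) auto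
  then show "l2norm (\<lambda>n. if n = k then 1 else 0) = 1"
    unfolding l2norm_def sq by simp
qed

lemma L2_set_sum_le:
  assumes "finite K"
  shows "L2_set (\<lambda>n. \<Sum>k\<in>K. f k n) F \<le> (\<Sum>k\<in>K. L2_set (f k) F)"
  using assms
proof (induction K rule: finite_induct)
  case empty
  then show ?case by (simp add: L2_set_def)
next
  case (insert k K)
  have "L2_set (\<lambda>n. \<Sum>k\<in>insert k K. f k n) F = L2_set (\<lambda>n. f k n + (\<Sum>k\<in>K. f k n)) F"
    using insert by simp
  also have "\<dots> \<le> L2_set (f k) F + L2_set (\<lambda>n. \<Sum>k\<in>K. f k n) F"
    by (rule L2_set_triangle_ineq)
  also have "\<dots> \<le> L2_set (f k) F + (\<Sum>k\<in>K. L2_set (f k) F)"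
    using insert by simp
  finally show ?case
    using insert by simp
qed

lemma L2_set_shift_le_l2norm:
  assumes "z \<in> l2" "finite F"
  shows "L2_set (\<lambda>n. cmod (z (n - k))) F \<le> l2norm z"
proof -
  have "inj_on (\<lambda>n. n - k) F" by (auto simp: inj_on_def)
  then have "L2_set (\<lambda>n. cmod (z (n - k))) F = L2_set (\<lambda>n. cmod (z n)) ((\<lambda>n. n - k) ` F)"
    unfolding L2_set_def by (simp add: sum.reindex)
  also have "\<dots> \<le> l2norm z"
    using assms by (intro L2_set_le_l2norm) auto
  finally show ?thesis .
qed

lemma band_op_diff: "band_op w a (\<lambda>n. x n - y n) = (\<lambda>n. band_op w a x n - band_op w a y n)"
  unfolding band_op_def mult_op_def shift_pow_def by (simp add: algebra_simps sum_subtractf)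

lemma band_op_scale: "band_op w a (\<lambda>n. c * x n) = (\<lambda>n. c * band_op w a x n)"
  unfolding band_op_def mult_op_def shift_pow_def by (simp add: algebra_simps sum_distrib_left)

lemma band_op_bounded:
  assumes "\<forall>k. bounded (range (a k))"
  shows "\<exists>C\<ge>0. \<forall>z\<in>l2. band_op w a z \<in> l2 \<and> l2norm (band_op w a z) \<le> C * l2norm z"
proof -
  let ?K = "{- int w..int w}"
  have "bounded (\<Union>k\<in>?K. range (a k))"
    using assms by (intro bounded_UN) auto
  then obtain M0 where M0: "\<And>k n. k \<in> ?K \<Longrightarrow> cmod (a k n) \<le> M0"
    unfolding bounded_iff by blast
  define M where "M = max M0 0"
  have M: "\<And>k n. k \<in> ?K \<Longrightarrow> cmod (a k n) \<le> M" "0 \<le> M"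
    using M0 unfolding M_def by (meson max.coboundedI1, simp)
  have "band_op w a z \<in> l2 \<and> l2norm (band_op w a z) \<le> card ?K * M * l2norm z"
    if z: "z \<in> l2" for z
  proof (rule l2_if_L2_set_le)
    fix F :: "int set" assume F: "finite F"
    have pointwise: "cmod (band_op w a z n) \<le> (\<Sum>k\<in>?K. M * cmod (z (n - k)))" for n
    proof -
      have "cmod (band_op w a z n) \<le> (\<Sum>k\<in>?K. cmod (a k n * z (n - k)))"
        unfolding band_op_def mult_op_def shift_pow_def by (rule norm_sum)
      also have "\<dots> \<le> (\<Sum>k\<in>?K. M * cmod (z (n - k)))"
        by (rule sum_mono) (auto simp: norm_mult intro!: mult_right_mono M)
      finally show ?thesis .
    qed
    have "L2_set (\<lambda>n. cmod (band_op w a z n)) F \<le> L2_set (\<lambda>n. \<Sum>k\<in>?K. M * cmod (z (n - k))) F"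
      by (rule L2_set_mono) (use pointwise in auto)
    also have "\<dots> \<le> (\<Sum>k\<in>?K. L2_set (\<lambda>n. M * cmod (z (n - k))) F)"
      by (rule L2_set_sum_le) simp
    also have "\<dots> = (\<Sum>k\<in>?K. M * L2_set (\<lambda>n. cmod (z (n - k))) F)"
      using M(2) by (simp add: L2_set_right_distrib)
    also have "\<dots> \<le> (\<Sum>k\<in>?K. M * l2norm z)"
      by (rule sum_mono) (use M(2) L2_set_shift_le_l2norm[OF z F] in \<open>auto intro: mult_left_mono\<close>)
    finally show "L2_set (\<lambda>n. cmod (band_op w a z n)) F \<le> card ?K * M * l2norm z"
      by simp
  qed
  moreover have "0 \<le> card ?K * M"
    using M(2) by simp
  ultimately show ?thesis
    by blast
qed

lemma band_operator_bounded:
  assumes "is_band_operator A"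
  obtains C where "0 \<le> C" "\<And>z. z \<in> l2 \<Longrightarrow> A z \<in> l2" "\<And>z. z \<in> l2 \<Longrightarrow> l2norm (A z) \<le> C * l2norm z"
proof -
  obtain w a where "\<forall>k. bounded (range (a k))" and A: "\<And>x. x \<in> l2 \<Longrightarrow> A x = band_op w a x"
    using assms unfolding is_band_operator_def by blast
  with band_op_bounded that show thesis by metis
qed

lemma band_operator_diff:
  assumes "is_band_operator A" "x \<in> l2" "y \<in> l2"
  shows "A (\<lambda>n. x n - y n) = (\<lambda>n. A x n - A y n)"
proof -
  obtain w a where A: "\<And>x. x \<in> l2 \<Longrightarrow> A x = band_op w a x"
    using assms(1) unfolding is_band_operator_def by blast
  show ?thesis
    using assms(2,3) by (simp add: A l2_diff band_op_diff)
qed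

lemma band_operator_scale:
  assumes "is_band_operator A" "x \<in> l2"
  shows "A (\<lambda>n. c * x n) = (\<lambda>n. c * A x n)"
proof -
  obtain w a where A: "\<And>x. x \<in> l2 \<Longrightarrow> A x = band_op w a x"
    using assms(1) unfolding is_band_operator_def by blast
  show ?thesis
    using assms(2) by (simp add: A l2_scale band_op_scale)
qed

definition truncate :: "nat \<Rightarrow> (int \<Rightarrow> complex) \<Rightarrow> int \<Rightarrow> complex" where
  "truncate N x n = (if n \<in> {- int N..int N} then x n else 0)"

lemma truncate_l2:
  assumes "x \<in> l2"
  shows "truncate N x \<in> l2"
proof -
  have "truncate N x \<in> l2 \<and> l2norm (truncate N x) \<le> l2norm x"
  proof (rule l2_if_L2_set_le)
    fix F :: "int set" assume "finite F"
    have "L2_set (\<lambda>n. cmod (truncate N x n)) F \<le> L2_set (\<lambda>n. cmod (x n)) F"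
      by (rule L2_set_mono) (auto simp: truncate_def)
    also have "\<dots> \<le> l2norm x"
      using assms \<open>finite F\<close> by (rule L2_set_le_l2norm)
    finally show "L2_set (\<lambda>n. cmod (truncate N x n)) F \<le> l2norm x" .
  qed
  then show ?thesis
    by blast
qed

lemma filterlim_symmetric_intervals_finite_subsets:
  "filterlim (\<lambda>N. {- int N..int N}) (finite_subsets_at_top UNIV) sequentially"
  unfolding filterlim_finite_subsets_at_top
proof (intro allI impI)
  fix X :: "int set" assume "finite X \<and> X \<subseteq> UNIV"
  then have bound: "\<bar>n\<bar> \<le> Max (abs ` X)" if "n \<in> X" for n
    using that by (intro Max_ge) auto
  have "X \<subseteq> {- int N..int N}" if "nat (Max (abs ` X)) \<le> N" for N
  proof
    fix n assume "n \<in> X"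
    then have "\<bar>n\<bar> \<le> int N"
      using order_trans[OF bound[OF \<open>n \<in> X\<close>]] that by (simp add: nat_le_iff)
    then show "n \<in> {- int N..int N}"
      by (simp add: abs_le_iff)
  qed
  then show "\<forall>\<^sub>F N in sequentially. finite {- int N..int N} \<and> X \<subseteq> {- int N..int N} \<and> {- int N..int N} \<subseteq> UNIV"
    by (intro eventually_sequentiallyI[of "nat (Max (abs ` X))"]) simp
qed

lemma tendsto_l2norm_truncate_diff:
  assumes "x \<in> l2"
  shows "(\<lambda>N. l2norm (\<lambda>n. truncate N x n - x n)) \<longlonglongrightarrow> 0"
proof -
  define f where "f = (\<lambda>n. (cmod (x n))\<^sup>2)"
  have summable: "f summable_on UNIV"
    using assms by (simp add: l2_def f_def)
  have tail: "l2norm (\<lambda>n. truncate N x n - x n) = sqrt (infsum f UNIV - sum f {- int N..int N})"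
    for N
  proof -
    let ?I = "{- int N..int N}"
    have "(\<Sum>\<^sub>\<infinity>n. (cmod (truncate N x n - x n))\<^sup>2) = infsum f (- ?I)"
      by (rule infsum_cong_neutral) (auto simp: truncate_def f_def)
    moreover have "infsum f UNIV = infsum f (- ?I) + sum f ?I"
      using infsum_Un_disjoint[OF summable_on_subset[OF summable subset_UNIV]
          summable_on_subset[OF summable subset_UNIV], of "- ?I" ?I]
      by simp
    ultimately show ?thesis
      by (simp add: l2norm_def)
  qed
  have "(\<lambda>N. sum f {- int N..int N}) \<longlonglongrightarrow> infsum f UNIV"
    using filterlim_compose[OF has_sum_infsum[OF summable, unfolded has_sum_def]
        filterlim_symmetric_intervals_finite_subsets] .
  then have "(\<lambda>N. sqrt (infsum f UNIV - sum f {- int N..int N})) \<longlonglongrightarrow> sqrt (infsum f UNIV - infsum f UNIV)"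
    by (intro tendsto_real_sqrt tendsto_diff tendsto_const)
  then show ?thesis
    by (simp add: tail)
qed

lemma tendsto_l2norm_band_operator_truncate:
  assumes "is_band_operator A" "x \<in> l2"
  shows "(\<lambda>N. l2norm (A (truncate N x))) \<longlonglongrightarrow> l2norm (A x)"
proof -
  obtain C where C: "0 \<le> C" "\<And>z. z \<in> l2 \<Longrightarrow> A z \<in> l2"
    "\<And>z. z \<in> l2 \<Longrightarrow> l2norm (A z) \<le> C * l2norm z"
    using band_operator_bounded[OF assms(1)] by blast
  have bound: "l2norm (\<lambda>n. A (truncate N x) n - A x n) \<le> C * l2norm (\<lambda>n. truncate N x n - x n)"
    for N
  proof -
    have "(\<lambda>n. A (truncate N x) n - A x n) = A (\<lambda>n. truncate N x n - x n)"
      using band_operator_diff[OF assms(1) truncate_l2 assms(2)] assms(2) by simp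
    then show ?thesis
      using C(3)[OF l2_diff[OF truncate_l2 assms(2)]] assms(2) by simp
  qed
  have "(\<lambda>N. C * l2norm (\<lambda>n. truncate N x n - x n)) \<longlonglongrightarrow> 0"
    using tendsto_mult_right_zero[OF tendsto_l2norm_truncate_diff[OF assms(2)]] .
  then have diff_lim: "(\<lambda>N. l2norm (\<lambda>n. A (truncate N x) n - A x n)) \<longlonglongrightarrow> 0"
    by (rule Lim_null_comparison[rotated]) (simp add: l2norm_nonneg bound)
  show ?thesis
    by (rule tendsto_l2norm[OF _ _ diff_lim]) (simp_all add: C(2) truncate_l2 assms(2))
qed

lemma ex_unit_vector_lower_norm_less:
  assumes "\<epsilon> > 0"
  shows "\<exists>x\<in>l2. l2norm x = 1 \<and> l2norm (A x) < lower_norm A + \<epsilon>"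
proof -
  define S where "S = {l2norm (A x) |x. x \<in> l2 \<and> l2norm x = 1}"
  have "l2norm (A (\<lambda>n. if n = 0 then 1 else 0)) \<in> S"
    unfolding S_def using unit_vector_l2 by blast
  then have "S \<noteq> {}" by blast
  moreover have "Inf S < lower_norm A + \<epsilon>"
    using assms by (simp add: lower_norm_def S_def)
  ultimately obtain t where "t \<in> S" "t < lower_norm A + \<epsilon>"
    using cInf_lessD by blast
  then show ?thesis
    unfolding S_def by blast
qed

lemma lower_norm_le_lower_norm_on:
  assumes "l \<le> r"
  shows "lower_norm A \<le> lower_norm_on l r A"
proof -
  define S where "S = {l2norm (A x) |x. x \<in> l2 \<and> l2norm x = 1}"
  define T where "T = {l2norm (A x) |x. x \<in> l2 \<and> l2norm x = 1 \<and> (\<forall>n. x n \<noteq> 0 \<longrightarrow> l \<le> n \<and> n \<le> r)}"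
  have "l2norm (A (\<lambda>n. if n = l then 1 else 0)) \<in> T"
    unfolding T_def using unit_vector_l2[of l] assms
    by (auto intro!: exI[of _ "\<lambda>n. if n = l then 1 else 0"] split: if_splits)
  then have "T \<noteq> {}" by blast
  moreover have "bdd_below S"
    unfolding S_def by (rule bdd_belowI[of _ 0]) (auto simp: l2norm_nonneg)
  moreover have "T \<subseteq> S"
    unfolding S_def T_def by blast
  ultimately have "Inf S \<le> Inf T"
    by (rule cInf_superset_mono)
  then show ?thesis
    by (simp add: lower_norm_def lower_norm_on_def S_def T_def)
qed

lemma lower_norm_on_le_quotient:
  assumes "is_band_operator A" "y \<in> l2" "l2norm y \<noteq> 0"
    and "\<forall>n. y n \<noteq> 0 \<longrightarrow> l \<le> n \<and> n \<le> r"
  shows "lower_norm_on l r A \<le> l2norm (A y) / l2norm y"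
proof -
  define c where "c = complex_of_real (inverse (l2norm y))"
  define u where "u = (\<lambda>n. c * y n)"
  have "cmod c = inverse (l2norm y)"
    unfolding c_def norm_of_real using l2norm_nonneg[of y] by simp
  then have u: "u \<in> l2" "l2norm u = 1"
    using assms(2,3) by (simp_all add: u_def l2_scale l2norm_scale)
  have "A u = (\<lambda>n. c * A y n)"
    unfolding u_def using assms(1,2) by (rule band_operator_scale)
  moreover have "A y \<in> l2"
    using band_operator_bounded[OF assms(1)] assms(2) by metis
  ultimately have Au: "l2norm (A u) = l2norm (A y) / l2norm y"
    using \<open>cmod c = inverse (l2norm y)\<close> by (simp add: l2norm_scale divide_inverse_commute)
  have "\<forall>n. u n \<noteq> 0 \<longrightarrow> l \<le> n \<and> n \<le> r"
    using assms(4) by (simp add: u_def)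
  then have "l2norm (A u) \<in> {l2norm (A x) |x. x \<in> l2 \<and> l2norm x = 1 \<and> (\<forall>n. x n \<noteq> 0 \<longrightarrow> l \<le> n \<and> n \<le> r)}"
    using u by blast
  then have "lower_norm_on l r A \<le> l2norm (A u)"
    unfolding lower_norm_on_def by (rule cInf_lower) (auto intro: bdd_belowI[of _ 0] simp: l2norm_nonneg)
  then show ?thesis
    using Au by simp
qed

theorem corollary3p2:
  fixes A :: "(int \<Rightarrow> complex) \<Rightarrow> (int \<Rightarrow> complex)" and \<epsilon> :: real
  assumes "is_band_operator A" and "\<epsilon> > 0"
  shows "\<exists>l r. l \<le> r \<and> lower_norm A \<le> lower_norm_on l r A \<and>
                lower_norm_on l r A < lower_norm A + \<epsilon>"
proof -
  obtain x where x: "x \<in> l2" "l2norm x = 1" "l2norm (A x) < lower_norm A + \<epsilon>"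
    using ex_unit_vector_lower_norm_less[OF assms(2)] by blast
  have norm_truncate: "(\<lambda>N. l2norm (truncate N x)) \<longlonglongrightarrow> 1"
    using tendsto_l2norm[OF truncate_l2 x(1) tendsto_l2norm_truncate_diff] x by simp
  have "(\<lambda>N. l2norm (A (truncate N x)) / l2norm (truncate N x)) \<longlonglongrightarrow> l2norm (A x)"
    using tendsto_divide[OF tendsto_l2norm_band_operator_truncate[OF assms(1) x(1)] norm_truncate]
    by simp
  then have "\<forall>\<^sub>F N in sequentially. l2norm (A (truncate N x)) / l2norm (truncate N x) < lower_norm A + \<epsilon>"
    using x(3) by (rule order_tendstoD(2))
  moreover have "\<forall>\<^sub>F N in sequentially. 0 < l2norm (truncate N x)"
    using norm_truncate zero_less_one by (rule order_tendstoD(1))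
  ultimately obtain N where N: "l2norm (A (truncate N x)) / l2norm (truncate N x) < lower_norm A + \<epsilon>"
    "0 < l2norm (truncate N x)"
    using eventually_happens'[OF sequentially_bot eventually_conj] by blast
  have "lower_norm_on (- int N) (int N) A \<le> l2norm (A (truncate N x)) / l2norm (truncate N x)"
    using N(2) by (intro lower_norm_on_le_quotient[OF assms(1) truncate_l2[OF x(1)]]) (auto simp: truncate_def)
  then show ?thesis
    using N(1) lower_norm_le_lower_norm_on[of "- int N" "int N" A] by fastforce
qed

end
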